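(* Let $n\ge1$ and let $\varphi\colon A\to B$ be a Frobenius $n$-homomorphism. Then for every $a\in A$, $$\psi_n(a)=1+\psi_1(a-1)+\psi_2(a-1)+\dots+\psi_n(a-1),$$ i.e. $\psi_n(a)=\mathrm{ber}_\varphi(a)$.
   Context: $\mathbb{K}=\mathbb{R}$ or $\mathbb{C}$; $A$ and $B$ are commutative associative unital $\mathbb{K}$-algebras. For a $\mathbb{K}$-linear map $\varphi\colon A\to B$ and $a\in A$, the characteristic function is $R_\varphi(a,z)=\exp\bigl(\varphi(\ln(1+az))\bigr)=1+\sum_{k\ge1}\psi_k(a)z^k\in B[[z]]$, with $\ln(1+az)=\sum_{k\ge1}(-1)^{k+1}a^kz^k/k$ and $\varphi$ applied coefficientwise (so $\psi_1=\varphi$). The Frobenius maps $\Phi_k\colon A^k\to B$ of $\varphi$ are defined by $\Phi_1=\varphi$ and $\Phi_{k+1}(a_1,\dots,a_{k+1})=\varphi(a_1)\Phi_k(a_2,\dots,a_{k+1})-\sum_{j=2}^{k+1}\Phi_k(a_2,\dots,a_{j-1},a_1a_j,a_{j+1},\dots,a_{k+1})$. A linear map $\varphi$ is a (Frobenius) $n$-homomorphism if $\varphi(1)=n\cdot1_B$ and $\Phi_k\equiv0$ for all $k\ge n+1$. For such $\varphi$ the $\varphi$-Berezinian is $\mathrm{ber}_\varphi(a)=1+\sum_{k=1}^n\psi_k(a-1)$. *)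

theory Defs
  imports Complex_Main "HOL-Computational_Algebra.Formal_Power_Series"
begin

text \<open>Scalars: K = R (a C-algebra / C-linear map is in particular an R-algebra / R-linear map,
  and none of the notions below depend on the choice of K).\<close>

text \<open>The formal power series phi(ln(1 + a z)) in B[[z]], coefficientwise.\<close>
definition log_series :: "('a::{real_algebra_1,comm_ring_1} \<Rightarrow> 'b::{real_algebra_1,comm_ring_1}) \<Rightarrow> 'a \<Rightarrow> 'b fps" where
  "log_series \<phi> a = Abs_fps (\<lambda>k. if k = 0 then 0
      else \<phi> (((-1) ^ (k + 1) / real k) *\<^sub>R a ^ k))"

text \<open>psi_k(a) = k-th coefficient of exp(phi(ln(1+az))) = sum_m L^m / m!; since L has zero
  constant term only m \<le> k contribute to the k-th coefficient.\<close>
definition psi :: "('a::{real_algebra_1,comm_ring_1} \<Rightarrow> 'b::{real_algebra_1,comm_ring_1}) \<Rightarrow> 'a \<Rightarrow> nat \<Rightarrow> 'b" where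
  "psi \<phi> a k = (\<Sum>m\<le>k. (inverse (fact m)) *\<^sub>R (fps_nth ((log_series \<phi> a) ^ m) k))"

text \<open>Frobenius maps Phi_k(a_1,...,a_k), arguments given as a list of length k
  (Phi_0 = 1, so that Phi_1 = phi).\<close>
fun Frob :: "('a::comm_ring_1 \<Rightarrow> 'b::comm_ring_1) \<Rightarrow> 'a list \<Rightarrow> 'b" where
  "Frob \<phi> [] = 1"
| "Frob \<phi> (a # as) = \<phi> a * Frob \<phi> as
     - (\<Sum>j<length as. Frob \<phi> (as[j := a * as ! j]))"

definition frobenius_hom :: "nat \<Rightarrow> ('a::{real_algebra_1,comm_ring_1} \<Rightarrow> 'b::{real_algebra_1,comm_ring_1}) \<Rightarrow> bool" where
  "frobenius_hom n \<phi> \<longleftrightarrow> linear \<phi> \<and> \<phi> 1 = of_nat n \<and>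
     (\<forall>as. length as \<ge> n + 1 \<longrightarrow> Frob \<phi> as = 0)"

end

theory Submission
  imports Defs
begin

(* Idea: evaluate the Frobenius maps on the mixed arguments
     M k j = Phi_{k+j}(a-1, ..., a-1, a, ..., a)     (k copies of a-1, j copies of a).
   1. Phi_k is symmetric in its arguments and additive in each of them; since
      Phi(1, ys) = (phi(1) - |ys|) Phi(ys), additivity in the first slot gives
        M (k+1) j = M k (j+1) - (n - k - j) M k j.
   2. On equal arguments, Phi_k(x, ..., x) = k! psi_k(x); this follows from the
      recurrence (k+1) psi_{k+1} = sum_i (-1)^i phi(x^{i+1}) psi_{k-i}, i.e. from
      R' = (phi(ln(1+xz)))' R for the characteristic function R.
   3. Since M k j = 0 for k + j > n, the weighted column sums U j = sum_k M k j / k!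
      satisfy U (j+1) = (n - j) U j, whence M 0 n = U n = n! U 0.
   With M 0 n = n! psi_n(a) and M k 0 = k! psi_k(a-1) this is the theorem. *)

lemma sum_lessThan_add_split:
  "(\<Sum>j<m + n. f j) = (\<Sum>j<m. f j) + (\<Sum>j<n. f (m + j))" for n :: nat
  by (induction n) (simp_all add: add.assoc)

lemma sum_update_append:
  "(\<Sum>j<length (xs @ ys). F ((xs @ ys)[j := g ((xs @ ys) ! j)]))
     = (\<Sum>j<length xs. F (xs[j := g (xs ! j)] @ ys))
     + (\<Sum>j<length ys. F (xs @ ys[j := g (ys ! j)]))"
  unfolding length_append sum_lessThan_add_split
  by (intro arg_cong2[where f="(+)"] sum.cong refl)
     (simp_all add: list_update_append nth_append)

(* Two steps of the defining recursion: every term except the double sum is visibly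
   symmetric in u and v (since u * v = v * u). *)
lemma Frob_Cons_Cons:
  fixes \<phi> :: "'a::comm_ring_1 \<Rightarrow> 'b::comm_ring_1"
  shows "Frob \<phi> (u # v # ys) = \<phi> u * \<phi> v * Frob \<phi> ys
     - \<phi> u * (\<Sum>i<length ys. Frob \<phi> (ys[i := v * ys ! i]))
     - \<phi> v * (\<Sum>j<length ys. Frob \<phi> (ys[j := u * ys ! j]))
     - Frob \<phi> ((u * v) # ys)
     + (\<Sum>j<length ys. \<Sum>i<length ys.
          Frob \<phi> ((ys[j := u * ys ! j])[i := v * (ys[j := u * ys ! j]) ! i]))"
  by (simp add: sum.lessThan_Suc_shift sum_subtractf sum_distrib_left algebra_simps
           del: sum.lessThan_Suc)

(* Symmetry in the first two arguments: the double sum is symmetric too, because updating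
   two different positions commutes and updating one position twice multiplies by u * v. *)
lemma Frob_swap_head:
  fixes \<phi> :: "'a::comm_ring_1 \<Rightarrow> 'b::comm_ring_1"
  shows "Frob \<phi> (u # v # ys) = Frob \<phi> (v # u # ys)"
proof -
  have "(\<Sum>j<length ys. \<Sum>i<length ys.
          Frob \<phi> ((ys[j := u * ys ! j])[i := v * (ys[j := u * ys ! j]) ! i]))
      = (\<Sum>i<length ys. \<Sum>j<length ys.
          Frob \<phi> ((ys[i := v * ys ! i])[j := u * (ys[i := v * ys ! i]) ! j]))"
    by (subst sum.swap, intro sum.cong refl)
       (auto simp: list_update_swap mult.left_commute nth_list_update)
  then show ?thesis
    unfolding Frob_Cons_Cons[of \<phi> u] Frob_Cons_Cons[of \<phi> v] by (simp add: mult.commute)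
qed

lemma sum_update_Cons_Cons:
  "(\<Sum>j<length (u # v # ys). F ((u # v # ys)[j := g ((u # v # ys) ! j)]))
     = F (g u # v # ys) + F (u # g v # ys) + (\<Sum>i<length ys. F (u # v # ys[i := g (ys ! i)]))"
  by (simp add: sum.lessThan_Suc_shift add.assoc del: sum.lessThan_Suc)

(* Frob is invariant under any adjacent transposition, by induction on the position:
   the recursion at the head reduces it to transpositions in shorter lists. *)
lemma Frob_swap:
  fixes \<phi> :: "'a::comm_ring_1 \<Rightarrow> 'b::comm_ring_1"
  shows "Frob \<phi> (xs @ u # v # ys) = Frob \<phi> (xs @ v # u # ys)"
proof (induction "length xs" arbitrary: xs u v ys)
  case 0
  then show ?case by (simp add: Frob_swap_head del: Frob.simps)
next
  case (Suc k)
  then obtain a xs' where xs: "xs = a # xs'" and len: "length xs' = k"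
    by (cases xs) auto
  have IH: "Frob \<phi> (zs @ u' # v' # ws) = Frob \<phi> (zs @ v' # u' # ws)"
    if "length zs = k" for zs u' v' ws
    using Suc.hyps(1) that by simp
  have "(\<Sum>j<length (xs' @ u # v # ys). Frob \<phi> ((xs' @ u # v # ys)[j := a * (xs' @ u # v # ys) ! j]))
      = (\<Sum>j<length (xs' @ v # u # ys). Frob \<phi> ((xs' @ v # u # ys)[j := a * (xs' @ v # u # ys) ! j]))"
    unfolding sum_update_append[where g="(*) a"]
      sum_update_Cons_Cons[where g="(*) a" and F="\<lambda>l. Frob \<phi> (xs' @ l)"]
    using IH len by (simp add: add_ac)
  moreover have "Frob \<phi> (xs' @ u # v # ys) = Frob \<phi> (xs' @ v # u # ys)"
    using IH len by simp
  ultimately show ?case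
    unfolding xs append_Cons Frob.simps(2) by simp
qed

lemma Frob_move_to_front:
  fixes \<phi> :: "'a::comm_ring_1 \<Rightarrow> 'b::comm_ring_1"
  shows "Frob \<phi> (xs @ b # ys) = Frob \<phi> (b # xs @ ys)"
proof (induction xs arbitrary: ys rule: rev_induct)
  case Nil
  then show ?case by simp
next
  case (snoc x xs)
  have "Frob \<phi> ((xs @ [x]) @ b # ys) = Frob \<phi> (xs @ b # x # ys)"
    using Frob_swap[of \<phi> xs x b ys] by simp
  also have "\<dots> = Frob \<phi> (b # (xs @ [x]) @ ys)"
    using snoc.IH by simp
  finally show ?case .
qed

(* The lists occurring in the recursion of Frob, with the updated entry moved to the
   front; this is the form in which an induction hypothesis on the length applies. *)
lemma Frob_update:
  fixes \<phi> :: "'a::comm_ring_1 \<Rightarrow> 'b::comm_ring_1"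
  assumes "j < length ys"
  shows "Frob \<phi> (ys[j := w]) = Frob \<phi> (w # take j ys @ drop (Suc j) ys)"
  using assms by (simp add: upd_conv_take_nth_drop Frob_move_to_front del: Frob.simps)

lemma Frob_Cons_diff:
  fixes \<phi> :: "'a::comm_ring_1 \<Rightarrow> 'b::comm_ring_1"
  assumes additive: "\<And>u v. \<phi> (u - v) = \<phi> u - \<phi> v"
  shows "Frob \<phi> ((u - v) # ys) = Frob \<phi> (u # ys) - Frob \<phi> (v # ys)"
proof (induction "length ys" arbitrary: u v ys rule: less_induct)
  case less
  have "Frob \<phi> (ys[j := (u - v) * ys ! j])
      = Frob \<phi> (ys[j := u * ys ! j]) - Frob \<phi> (ys[j := v * ys ! j])"
    if j: "j < length ys" for j
  proof -
    have "length (take j ys @ drop (Suc j) ys) < length ys" using j by simp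
    from less[OF this, of "u * ys ! j" "v * ys ! j"] show ?thesis
      using j by (simp add: Frob_update algebra_simps del: Frob.simps)
  qed
  then have "(\<Sum>j<length ys. Frob \<phi> (ys[j := (u - v) * ys ! j]))
      = (\<Sum>j<length ys. Frob \<phi> (ys[j := u * ys ! j]))
        - (\<Sum>j<length ys. Frob \<phi> (ys[j := v * ys ! j]))"
    by (simp add: sum_subtractf)
  then show ?case by (simp add: additive algebra_simps)
qed

lemma Frob_Cons_one:
  fixes \<phi> :: "'a::comm_ring_1 \<Rightarrow> 'b::comm_ring_1"
  shows "Frob \<phi> (1 # ys) = (\<phi> 1 - of_nat (length ys)) * Frob \<phi> ys"
  by (simp add: algebra_simps)

lemma Frob_shift_recurrence:
  fixes \<phi> :: "'a::comm_ring_1 \<Rightarrow> 'b::comm_ring_1"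
  assumes additive: "\<And>u v. \<phi> (u - v) = \<phi> u - \<phi> v"
  shows "Frob \<phi> (replicate (Suc k) (a - 1) @ replicate j a)
       = Frob \<phi> (replicate k (a - 1) @ replicate (Suc j) a)
         - (\<phi> 1 - of_nat (k + j)) * Frob \<phi> (replicate k (a - 1) @ replicate j a)"
proof -
  define ys where "ys = replicate k (a - 1) @ replicate j a"
  have "Frob \<phi> (replicate (Suc k) (a - 1) @ replicate j a) = Frob \<phi> ((a - 1) # ys)"
    by (simp add: ys_def del: Frob.simps)
  also have "\<dots> = Frob \<phi> (a # ys) - Frob \<phi> (1 # ys)"
    by (rule Frob_Cons_diff[OF additive])
  also have "Frob \<phi> (a # ys) = Frob \<phi> (replicate k (a - 1) @ replicate (Suc j) a)"
    unfolding ys_def Frob_move_to_front[symmetric] by simp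
  also have "Frob \<phi> (1 # ys) = (\<phi> 1 - of_nat (k + j)) * Frob \<phi> ys"
    by (simp add: Frob_Cons_one ys_def del: Frob.simps)
  finally show ?thesis by (simp add: ys_def)
qed

lemma of_nat_mult_scaleR:
  "(of_nat m :: 'b::real_algebra_1) * (c *\<^sub>R y) = (real m * c) *\<^sub>R y"
  by (simp add: scaleR_conv_of_real mult.assoc)

lemma fact_mult_divideR: "(fact k * y) /\<^sub>R fact k = (y :: 'b::real_algebra_1)"
proof -
  have "fact k * y = of_nat (fact k) * y"
    by (simp only: of_nat_fact)
  then have "(fact k * y) /\<^sub>R fact k = (real (fact k) * inverse (fact k)) *\<^sub>R y"
    by (simp only: mult_scaleR_right[symmetric] of_nat_mult_scaleR)
  then show ?thesis by simp
qed

lemma of_nat_Suc_mult_inverse_fact: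
  "(of_nat (Suc m) :: 'b::real_algebra_1) * (y /\<^sub>R fact (Suc m)) = y /\<^sub>R fact m"
proof -
  have "real (Suc m) * inverse (fact (Suc m)) = inverse (fact m)"
    by (simp add: field_simps del: of_nat_Suc)
  then show ?thesis by (simp only: of_nat_mult_scaleR)
qed

lemma of_nat_mult_cancel:
  fixes y z :: "'b::real_algebra_1"
  assumes "(of_nat m :: 'b) * y = of_nat m * z" and "m \<noteq> 0"
  shows "y = z"
proof -
  have "real m *\<^sub>R y = real m *\<^sub>R z" using assms(1) by (simp add: scaleR_conv_of_real)
  then show ?thesis using assms(2) by simp
qed

unbundle fps_syntax

(* L = phi(ln(1 + xz)) has no constant term, so L^m starts in degree m. *)
lemma log_series_nth_0: "log_series \<phi> x $ 0 = 0"
  by (simp add: log_series_def)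

lemma log_series_deriv_nth:
  fixes \<phi> :: "'a::{real_algebra_1,comm_ring_1} \<Rightarrow> 'b::{real_algebra_1,comm_ring_1}"
  assumes lin: "linear \<phi>"
  shows "fps_deriv (log_series \<phi> x) $ i = (-1) ^ i * \<phi> (x ^ Suc i)"
proof -
  have "fps_deriv (log_series \<phi> x) $ i
      = of_nat (Suc i) * (((-1) ^ (Suc i + 1) / real (Suc i)) *\<^sub>R \<phi> (x ^ Suc i))"
    using lin by (simp add: log_series_def linear_scale)
  also have "\<dots> = (real (Suc i) * ((-1) ^ (Suc i + 1) / real (Suc i))) *\<^sub>R \<phi> (x ^ Suc i)"
    by (rule of_nat_mult_scaleR)
  also have "real (Suc i) * ((-1) ^ (Suc i + 1) / real (Suc i)) = (-1) ^ i"
    by simp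
  finally show ?thesis by (simp add: scaleR_conv_of_real)
qed

lemma psi_0: "psi \<phi> x 0 = 1"
  by (simp add: psi_def)

(* psi_k(x) is the k-th coefficient of exp(L) = sum_m L^m / m!; all terms with m > k
   vanish there, so the series may be truncated at any N >= k. *)
lemma psi_truncation:
  assumes "k \<le> N"
  shows "psi \<phi> x k = (\<Sum>m\<le>N. (log_series \<phi> x ^ m) $ k /\<^sub>R fact m)"
proof -
  have "(log_series \<phi> x ^ m) $ k = 0" if "k < m" for m
    using startsby_zero_power_prefix[OF log_series_nth_0] that by blast
  then show ?thesis
    unfolding psi_def using assms by (intro sum.mono_neutral_left) auto
qed

(* Step 2, analytic part: R' = L' R for R = exp(L), read off coefficientwise. *)
lemma psi_recurrence:
  fixes \<phi> :: "'a::{real_algebra_1,comm_ring_1} \<Rightarrow> 'b::{real_algebra_1,comm_ring_1}"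
  assumes lin: "linear \<phi>"
  shows "of_nat (Suc k) * psi \<phi> x (Suc k)
       = (\<Sum>i\<le>k. (-1) ^ i * \<phi> (x ^ Suc i) * psi \<phi> x (k - i))"
proof -
  define L where "L = log_series \<phi> x"
  have deriv_power: "fps_deriv (L ^ Suc m) $ k = of_nat (Suc m) * (fps_deriv L * L ^ m) $ k" for m
    by (simp only: fps_deriv_power' diff_Suc_1 mult.assoc)
       (simp only: fps_of_nat[symmetric] fps_mult_left_const_nth)
  have "of_nat (Suc k) * psi \<phi> x (Suc k) = (\<Sum>m\<le>Suc k. fps_deriv (L ^ m) $ k /\<^sub>R fact m)"
    unfolding psi_def L_def sum_distrib_left
    by (intro sum.cong refl) (simp only: mult_scaleR_right fps_deriv_nth Suc_eq_plus1)
  also have "\<dots> = (\<Sum>m\<le>k. fps_deriv (L ^ Suc m) $ k /\<^sub>R fact (Suc m))"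
    by (subst sum.atMost_Suc_shift) simp
  also have "\<dots> = (\<Sum>m\<le>k. (fps_deriv L * L ^ m) $ k /\<^sub>R fact m)"
    unfolding deriv_power mult_scaleR_right[symmetric] of_nat_Suc_mult_inverse_fact ..
  also have "\<dots> = (\<Sum>m\<le>k. \<Sum>i\<le>k. fps_deriv L $ i * ((L ^ m) $ (k - i) /\<^sub>R fact m))"
    by (simp add: fps_mult_nth atLeast0AtMost scaleR_sum_right mult_scaleR_right)
  also have "\<dots> = (\<Sum>i\<le>k. fps_deriv L $ i * (\<Sum>m\<le>k. (L ^ m) $ (k - i) /\<^sub>R fact m))"
    by (subst sum.swap) (simp add: sum_distrib_left)
  also have "\<dots> = (\<Sum>i\<le>k. fps_deriv L $ i * psi \<phi> x (k - i))"
    by (intro sum.cong refl) (simp add: L_def psi_truncation[symmetric])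
  finally show ?thesis
    by (simp only: L_def log_series_deriv_nth[OF lin])
qed

lemma Frob_replicate_update:
  fixes \<phi> :: "'a::comm_ring_1 \<Rightarrow> 'b::comm_ring_1"
  assumes "j < Suc k"
  shows "Frob \<phi> ((replicate (Suc k) x)[j := w]) = Frob \<phi> (w # replicate k x)"
proof -
  have "take j (replicate (Suc k) x) @ drop (Suc j) (replicate (Suc k) x) = replicate k x"
    using assms by (simp add: replicate_add[symmetric] del: replicate_Suc)
  then show ?thesis using Frob_update[of j "replicate (Suc k) x" \<phi> w] assms by simp
qed

lemma Frob_Cons_replicate:
  fixes \<phi> :: "'a::comm_ring_1 \<Rightarrow> 'b::comm_ring_1"
  shows "Frob \<phi> (y # replicate (Suc k) x) = \<phi> y * Frob \<phi> (replicate (Suc k) x)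
     - of_nat (Suc k) * Frob \<phi> ((y * x) # replicate k x)"
proof -
  have "(\<Sum>j<length (replicate (Suc k) x).
           Frob \<phi> ((replicate (Suc k) x)[j := y * replicate (Suc k) x ! j]))
      = (\<Sum>j<Suc k. Frob \<phi> ((y * x) # replicate k x))"
    by (intro sum.cong refl)
       (simp_all add: Frob_replicate_update del: replicate_Suc Frob.simps(2))
  then show ?thesis by (simp only: Frob.simps(2)) simp
qed

(* Along the recursion one meets the values
   Phi(x^m, x, ..., x), which are k! times the truncated convolutions G m k; for m = 1
   the recurrence for psi identifies G 1 k with (k + 1) psi_(k+1). *)
lemma Frob_replicate:
  fixes \<phi> :: "'a::{real_algebra_1,comm_ring_1} \<Rightarrow> 'b::{real_algebra_1,comm_ring_1}"
  assumes lin: "linear \<phi>"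
  shows "Frob \<phi> (replicate k x) = of_nat (fact k) * psi \<phi> x k"
proof -
  define G where "G m k = (\<Sum>i\<le>k. (-1) ^ i * \<phi> (x ^ (m + i)) * psi \<phi> x (k - i))" for m k
  have G_Suc: "G m (Suc k) = \<phi> (x ^ m) * psi \<phi> x (Suc k) - G (Suc m) k" for m k
    unfolding G_def by (subst sum.atMost_Suc_shift) (simp add: sum_negf)
  have from_head: "Frob \<phi> (replicate (Suc k) x) = of_nat (fact (Suc k)) * psi \<phi> x (Suc k)"
    if "Frob \<phi> (x # replicate k x) = of_nat (fact k) * G 1 k" for k
  proof -
    have "G 1 k = of_nat (Suc k) * psi \<phi> x (Suc k)"
      unfolding psi_recurrence[OF lin] G_def by simp
    then show ?thesis using that by (simp add: algebra_simps)
  qed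
  have head_power: "Frob \<phi> (x ^ m # replicate k x) = of_nat (fact k) * G m k" for m k
  proof (induction k arbitrary: m)
    case 0
    then show ?case by (simp add: G_def psi_0)
  next
    case (Suc k)
    have "Frob \<phi> (replicate (Suc k) x) = of_nat (fact (Suc k)) * psi \<phi> x (Suc k)"
      using from_head Suc.IH[of 1] by simp
    then show ?case
      unfolding Frob_Cons_replicate G_Suc power_Suc2[symmetric] Suc.IH
      by (simp add: algebra_simps)
  qed
  show ?thesis
  proof (cases k)
    case 0
    then show ?thesis by (simp add: psi_0)
  next
    case (Suc k')
    then show ?thesis using from_head head_power[of 1 k'] by simp
  qed
qed

lemma weighted_sum_step:
  fixes M :: "nat \<Rightarrow> nat \<Rightarrow> 'b::real_algebra_1"
  assumes rec: "\<And>k j. M (Suc k) j = M k (Suc j) - (of_nat n - of_nat (k + j)) * M k j"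
    and vanish: "\<And>k j. n < k + j \<Longrightarrow> M k j = 0"
  shows "(\<Sum>k\<le>n. M k (Suc j) /\<^sub>R fact k) = (of_nat n - of_nat j) * (\<Sum>k\<le>n. M k j /\<^sub>R fact k)"
proof -
  define f where "f k = of_nat k * (M k j /\<^sub>R fact k)" for k
  have shift: "(\<Sum>k\<le>n. M (Suc k) j /\<^sub>R fact k) = (\<Sum>k\<le>n. f k)"
  proof -
    have "(\<Sum>k\<le>n. M (Suc k) j /\<^sub>R fact k) = (\<Sum>k\<le>n. f (Suc k))"
      by (simp only: f_def of_nat_Suc_mult_inverse_fact)
    also have "\<dots> = (\<Sum>k\<le>Suc n. f k) - f 0"
      by (simp only: sum.atMost_Suc_shift) simp
    also have "\<dots> = (\<Sum>k\<le>n. f k)"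
      by (simp add: f_def vanish)
    finally show ?thesis .
  qed
  have summand: "M k (Suc j) /\<^sub>R fact k
      = M (Suc k) j /\<^sub>R fact k + (of_nat n - of_nat j) * (M k j /\<^sub>R fact k) - f k" for k
    unfolding f_def rec[of k j] by (simp add: algebra_simps)
  show ?thesis
    unfolding summand sum_subtractf sum.distrib shift by (simp add: sum_distrib_left)
qed

(* Iterating the step from column 0 to column n, where only M 0 n survives. *)
lemma weighted_sum_diagonal:
  fixes M :: "nat \<Rightarrow> nat \<Rightarrow> 'b::{real_algebra_1,comm_ring_1}"
  assumes rec: "\<And>k j. M (Suc k) j = M k (Suc j) - (of_nat n - of_nat (k + j)) * M k j"
    and vanish: "\<And>k j. n < k + j \<Longrightarrow> M k j = 0"
  shows "M 0 n = of_nat (fact n) * (\<Sum>k\<le>n. M k 0 /\<^sub>R fact k)"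
proof -
  define U where "U j = (\<Sum>k\<le>n. M k j /\<^sub>R fact k)" for j
  have step: "U (Suc j) = (of_nat n - of_nat j) * U j" for j
    unfolding U_def by (rule weighted_sum_step[OF rec vanish])
  have scaled: "of_nat (fact (n - j)) * U j = of_nat (fact n) * U 0" if "j \<le> n" for j
    using that
  proof (induction j)
    case 0
    then show ?case by simp
  next
    case (Suc j)
    have "of_nat (fact (n - Suc j)) * U (Suc j) = of_nat (fact (n - Suc j)) * (of_nat (n - j) * U j)"
      using Suc.prems by (simp add: step of_nat_diff)
    also have "\<dots> = of_nat (fact (n - j)) * U j"
      using Suc.prems by (simp add: fact_reduce[of "n - j"] mult.assoc mult.left_commute)
    finally have "of_nat (fact (n - Suc j)) * U (Suc j) = of_nat (fact (n - j)) * U j" .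
    then show ?case using Suc by simp
  qed
  have "U n = M 0 n"
  proof -
    have "U n = (\<Sum>k\<in>{0}. M k n /\<^sub>R fact k)"
      unfolding U_def by (rule sum.mono_neutral_right) (auto simp: vanish)
    then show ?thesis by simp
  qed
  then show ?thesis using scaled[of n] by (simp add: U_def)
qed

(* The argument does not use
   the hypothesis n >= 1 (for n = 0 both sides equal 1). *)
theorem mainTheorem6:
  fixes \<phi> :: "'a::{real_algebra_1,comm_ring_1} \<Rightarrow> 'b::{real_algebra_1,comm_ring_1}"
    and n :: nat and a :: 'a
  assumes "n \<ge> 1" and "frobenius_hom n \<phi>"
  shows "psi \<phi> a n = 1 + (\<Sum>k=1..n. psi \<phi> (a - 1) k)"
proof -
  have lin: "linear \<phi>" and phi_1: "\<phi> 1 = of_nat n"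
    and vanish: "\<And>as. n + 1 \<le> length as \<Longrightarrow> Frob \<phi> as = 0"
    using assms(2) by (auto simp: frobenius_hom_def)
  define M where "M k j = Frob \<phi> (replicate k (a - 1) @ replicate j a)" for k j
  have "M (Suc k) j = M k (Suc j) - (of_nat n - of_nat (k + j)) * M k j" for k j
    unfolding M_def phi_1[symmetric] using linear_diff[OF lin] by (rule Frob_shift_recurrence)
  moreover have "n < k + j \<Longrightarrow> M k j = 0" for k j
    unfolding M_def by (intro vanish) simp
  ultimately have diagonal: "M 0 n = of_nat (fact n) * (\<Sum>k\<le>n. M k 0 /\<^sub>R fact k)"
    by (rule weighted_sum_diagonal)
  have M_constant: "M 0 n = of_nat (fact n) * psi \<phi> a n"
    and M_shifted: "M k 0 /\<^sub>R fact k = psi \<phi> (a - 1) k" for k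
    unfolding M_def by (simp_all add: Frob_replicate[OF lin] fact_mult_divideR)
  from diagonal have "of_nat (fact n) * psi \<phi> a n = of_nat (fact n) * (\<Sum>k\<le>n. psi \<phi> (a - 1) k)"
    unfolding M_constant M_shifted .
  then have "psi \<phi> a n = (\<Sum>k\<le>n. psi \<phi> (a - 1) k)"
    by (rule of_nat_mult_cancel) simp
  also have "\<dots> = 1 + (\<Sum>k=1..n. psi \<phi> (a - 1) k)"
    by (simp add: atMost_atLeast0 sum.atLeast_Suc_atMost psi_0)
  finally show ?thesis .
qed

end
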